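(* Let $a_0,\dots,a_N\in\mathbb{Q}$ and $r,d\in\mathbb{N}$ with $r\le N$, let $m=(r+1)(d+1)$, and let $M=(A\odot B_d\,|\,A\odot B_{d-1}\,|\,\cdots\,|\,A\odot B_0)\in\mathbb{Q}^{(N-r+1)\times m}$, with $A$, $B_j$, $\odot$ as in the context. Consider the following procedure (Algorithm 2). (1) Choose a prime $p$ and set $q=p$. (2) Compute a row-reduced basis $V$ of $\ker M \bmod p$ (i.e. of the kernel of the reduction of $M$ modulo $p$ over $\mathbb{F}_p$, the matrix with rows the elements of $V$ being in reduced row echelon form; entries are represented by integers in $\{0,\dots,p-1\}$). (3) If $V=\emptyset$, return "no recurrence found". (4) Repeat: choose a new prime $p$ (different from all primes used before) and compute a row-reduced basis $W$ of $\ker M \bmod p$; combine $V$ and $W$ entrywise by Chinese remaindering into a set $V$ of vectors in $\mathbb{Z}^m$ such that the lattice generated by $V\cup\{pq e_1,\dots,pq e_m\}$ equals $\{w\in\mathbb{Z}^m : Mw\equiv 0 \bmod pq\}$, and set $q:=pq$; apply the LLL algorithm to $V\cup\{qe_1,\dots,qe_m\}$ (where $e_i$ is the $i$th unit vector of $\mathbb{Z}^m$) and let $w$ be the first vector of the output; stop repeating as soon as $Mw=0$ and $w\neq 0$ (i.e. the recurrence $\sum_{i,j}c_{i,j}b_j(n)a_{n+i}=0$ with coefficient vector $w$ is valid on the given data). (5) Return the recurrence corresponding to $w$. Assume that every prime used does not divide any denominator of an entry of $M$ and that the rank of $M$ modulo each such prime equals the rank of $M$ over $\mathbb{Q}$.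 Then the procedure terminates, and if it returns a recurrence, the returned coefficient vector $w\in\mathbb{Z}^m$ is a nonzero element of $\ker_{\mathbb{Z}}M$, i.e. the corresponding recurrence of order $r$ and degree $d$ holds for $n=0,\dots,N-r$.
   Context: Fix a $\mathbb{Q}$-basis $b_0,b_1,\dots$ of $\mathbb{Q}[x]$ such that for every $j$, $b_0,\dots,b_j$ span the polynomials of degree at most $j$. For given $a_0,\dots,a_N\in\mathbb{Q}$ and $r\le N$, $A\in\mathbb{Q}^{(N-r+1)\times(r+1)}$ is the matrix with entry $a_{i+s}$ in row $i$ and column $s$ ($0\le i\le N-r$, $0\le s\le r$), and $B_j\in\mathbb{Q}^{(N-r+1)\times(r+1)}$ is the matrix whose row $i$ has all entries equal to $b_j(i)$. $M_1\odot M_2$ denotes the entrywise product. A vector $c\in\mathbb{Q}^{(r+1)(d+1)}$, split into blocks of length $r+1$ for $j=d,d-1,\dots,0$ with entries $c_{0,j},\dots,c_{r,j}$, corresponds to the recurrence $\sum_{i=0}^r\sum_{j=0}^d c_{i,j}b_j(n)a_{n+i}=0$; it holds on the data iff $Mc=0$. For a rational matrix $M$ with $m$ columns, $\ker_{\mathbb{Z}}M=\{x\in\mathbb{Z}^m: Mx=0\}$. LLL is the Lenstra–Lenstra–Lovász lattice reduction algorithm; it returns a basis of the input lattice whose first vector has Euclidean length at most $2^{m}$ times the length of a shortest nonzero vector of the lattice. *)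

theory Defs
  imports "HOL-Computational_Algebra.Polynomial" "HOL-Computational_Algebra.Primes"
begin

text \<open>The matrix M = (A .* B_d | ... | A .* B_0): column t lies in block t div (r+1),
which corresponds to j = d - t div (r+1), and has s = t mod (r+1).\<close>
definition recM :: "(nat \<Rightarrow> rat) \<Rightarrow> (nat \<Rightarrow> rat poly) \<Rightarrow> nat \<Rightarrow> nat \<Rightarrow> nat \<Rightarrow> nat \<Rightarrow> rat" where
  "recM a b r d i t = a (i + t mod (r+1)) * poly (b (d - t div (r+1))) (of_nat i)"

definition mat_vec :: "(nat \<Rightarrow> nat \<Rightarrow> rat) \<Rightarrow> nat \<Rightarrow> int list \<Rightarrow> nat \<Rightarrow> rat" where
  "mat_vec M m w i = (\<Sum>t<m. M i t * of_int (w ! t))"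

definition in_ker :: "(nat \<Rightarrow> nat \<Rightarrow> rat) \<Rightarrow> nat \<Rightarrow> nat \<Rightarrow> int list \<Rightarrow> bool" where
  "in_ker M n m w \<longleftrightarrow> length w = m \<and> (\<forall>i<n. mat_vec M m w i = 0)"

definition rat_cong0 :: "int \<Rightarrow> rat \<Rightarrow> bool" where
  "rat_cong0 q x \<longleftrightarrow> (\<exists>u v. v > 0 \<and> coprime v q \<and> q dvd u \<and> x = of_int u / of_int v)"

definition cong_ker :: "(nat \<Rightarrow> nat \<Rightarrow> rat) \<Rightarrow> nat \<Rightarrow> nat \<Rightarrow> int \<Rightarrow> int list \<Rightarrow> bool" where
  "cong_ker M n m q w \<longleftrightarrow> length w = m \<and> (\<forall>i<n. rat_cong0 q (mat_vec M m w i))"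

text \<open>ker M mod p is not the zero space (equivalently its row-reduced basis V is nonempty)\<close>
definition kernel_mod_nontrivial :: "(nat \<Rightarrow> nat \<Rightarrow> rat) \<Rightarrow> nat \<Rightarrow> nat \<Rightarrow> int \<Rightarrow> bool" where
  "kernel_mod_nontrivial M n m p \<longleftrightarrow> (\<exists>w. cong_ker M n m p w \<and> \<not> (\<forall>t<m. p dvd w ! t))"

definition rows_indep_Q :: "(nat \<Rightarrow> nat \<Rightarrow> rat) \<Rightarrow> nat \<Rightarrow> nat set \<Rightarrow> bool" where
  "rows_indep_Q M m I \<longleftrightarrow>
     (\<forall>c :: nat \<Rightarrow> rat. (\<forall>t<m. (\<Sum>i\<in>I. c i * M i t) = 0) \<longrightarrow> (\<forall>i\<in>I. c i = 0))"

definition rank_Q :: "(nat \<Rightarrow> nat \<Rightarrow> rat) \<Rightarrow> nat \<Rightarrow> nat \<Rightarrow> nat" where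
  "rank_Q M n m = Max {card I | I. I \<subseteq> {..<n} \<and> rows_indep_Q M m I}"

definition rows_indep_mod :: "int \<Rightarrow> (nat \<Rightarrow> nat \<Rightarrow> rat) \<Rightarrow> nat \<Rightarrow> nat set \<Rightarrow> bool" where
  "rows_indep_mod p M m I \<longleftrightarrow>
     (\<forall>c :: nat \<Rightarrow> int. (\<forall>t<m. rat_cong0 p (\<Sum>i\<in>I. of_int (c i) * M i t)) \<longrightarrow> (\<forall>i\<in>I. p dvd c i))"

definition rank_mod :: "int \<Rightarrow> (nat \<Rightarrow> nat \<Rightarrow> rat) \<Rightarrow> nat \<Rightarrow> nat \<Rightarrow> nat" where
  "rank_mod p M n m = Max {card I | I. I \<subseteq> {..<n} \<and> rows_indep_mod p M m I}"

definition lattice_of :: "nat \<Rightarrow> int list list \<Rightarrow> int list set" where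
  "lattice_of m S = {v. length v = m \<and>
     (\<exists>c :: nat \<Rightarrow> int. \<forall>t<m. v ! t = (\<Sum>i<length S. c i * (S ! i) ! t))}"

definition int_lin_indep :: "nat \<Rightarrow> int list list \<Rightarrow> bool" where
  "int_lin_indep m S \<longleftrightarrow>
     (\<forall>c :: nat \<Rightarrow> int. (\<forall>t<m. (\<Sum>i<length S. c i * (S ! i) ! t) = 0) \<longrightarrow> (\<forall>i<length S. c i = 0))"

definition sqnorm :: "int list \<Rightarrow> int" where
  "sqnorm v = (\<Sum>x\<leftarrow>v. x ^ 2)"

definition unitvec :: "nat \<Rightarrow> int \<Rightarrow> nat \<Rightarrow> int list" where
  "unitvec m q i = map (\<lambda>t. if t = i then q else 0) [0..<m]"

text \<open>Specification of LLL in dimension m: returns a basis of the input lattice whose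
  first vector has length at most 2^m times that of a shortest nonzero lattice vector
  (stated with squared norms: sqnorm \<le> 4^m * sqnorm).\<close>
definition lll_spec :: "nat \<Rightarrow> (int list list \<Rightarrow> int list list) \<Rightarrow> bool" where
  "lll_spec m lll \<longleftrightarrow> (\<forall>S. (\<forall>s\<in>set S. length s = m) \<longrightarrow>
      (\<forall>s\<in>set (lll S). length s = m) \<and>
      lattice_of m (lll S) = lattice_of m S \<and>
      int_lin_indep m (lll S) \<and>
      (lll S \<noteq> [] \<longrightarrow>
         (\<forall>v\<in>lattice_of m S. v \<noteq> replicate m 0 \<longrightarrow> sqnorm (hd (lll S)) \<le> 4 ^ m * sqnorm v)))"

end

theory Submission imports Defs begin

text \<open>A nonzero kernel of M modulo p forces rank M mod p < m, hence rank M < m over \<rat>,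
  so \<open>ker\<^sub>\<int> M\<close> contains a nonzero vector \<open>v\<^sub>0\<close>. Since \<open>v\<^sub>0\<close> lies in every lattice
  \<open>{w. M w \<equiv> 0 mod q}\<close>, LLL returns a nonzero \<open>w\<close> in that lattice with
  \<open>\<parallel>w\<parallel>\<^sup>2 \<le> 4\<^sup>m \<parallel>v\<^sub>0\<parallel>\<^sup>2\<close>, a bound independent of \<open>q\<close>. After clearing the denominators
  of M, the entries of M w become integers that are divisible by \<open>q\<close> and bounded independently
  of \<open>q\<close>; as soon as the product \<open>q\<close> of the primes used exceeds that bound, M w = 0.\<close>

lemma not_dvd_mult_if_zero_or_prime_elem:
  fixes p :: "'a::idom"
  assumes "p = 0 \<or> prime_elem p" "\<not> p dvd a" "\<not> p dvd b"
  shows "\<not> p dvd a * b"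
  using assms by (auto simp: prime_elem_dvd_mult_iff)

lemma exists_dependence_mod:
  fixes p :: "'a::idom" and v :: "'i \<Rightarrow> 'j \<Rightarrow> 'a"
  assumes p: "p = 0 \<or> prime_elem p"
    and "finite T" "finite S" "card T < card S"
  shows "\<exists>c. (\<exists>i\<in>S. \<not> p dvd c i) \<and> (\<forall>t\<in>T. p dvd (\<Sum>i\<in>S. c i * v i t))"
  using assms(2-4)
proof (induction T arbitrary: S v rule: finite_induct)
  case empty
  then obtain i0 where "i0 \<in> S" by fastforce
  moreover have "\<not> p dvd 1" using p by (auto simp: prime_elem_def)
  ultimately show ?case by (intro exI[of _ "\<lambda>i. if i = i0 then 1 else 0"]) auto
next
  case (insert x T)
  show ?case
  proof (cases "\<forall>i\<in>S. p dvd v i x")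
    case True
    from insert have "card T < card S" by auto
    with insert.IH[OF insert.prems(1)] obtain c where
      c: "\<exists>i\<in>S. \<not> p dvd c i" "\<forall>t\<in>T. p dvd (\<Sum>i\<in>S. c i * v i t)" by blast
    have "p dvd (\<Sum>i\<in>S. c i * v i x)" using True by (intro dvd_sum) auto
    with c show ?thesis by auto
  next
    case False
    then obtain j where j: "j \<in> S" "\<not> p dvd v j x" by blast
    \<comment> \<open>Eliminate coordinate x using the pivot j, whose x-entry is nonzero mod p.\<close>
    define u where "u i t = v j x * v i t - v i x * v j t" for i t
    have "card T < card (S - {j})" using insert j by auto
    with insert.IH[of "S - {j}" u] insert.prems obtain c' where
      c': "\<exists>i\<in>S-{j}. \<not> p dvd c' i" "\<forall>t\<in>T. p dvd (\<Sum>i\<in>S-{j}. c' i * u i t)" by auto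
    define c where "c i = (if i = j then -(\<Sum>l\<in>S-{j}. c' l * v l x) else v j x * c' i)" for i
    have eq: "(\<Sum>i\<in>S. c i * v i t) = (\<Sum>i\<in>S-{j}. c' i * u i t)" for t
    proof -
      have "(\<Sum>i\<in>S. c i * v i t) = c j * v j t + (\<Sum>i\<in>S-{j}. c i * v i t)"
        using j insert.prems by (simp add: sum.remove)
      also have "(\<Sum>i\<in>S-{j}. c i * v i t) = (\<Sum>i\<in>S-{j}. v j x * c' i * v i t)"
        by (intro sum.cong) (auto simp: c_def)
      also have "c j * v j t = -(\<Sum>l\<in>S-{j}. c' l * v l x * v j t)"
        by (simp add: c_def sum_distrib_right)
      finally show ?thesis
        by (simp add: u_def algebra_simps sum_subtractf sum.distrib[symmetric])
    qed
    have "u i x = 0" for i by (simp add: u_def)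
    moreover from c'(1) obtain i where "i \<in> S - {j}" "\<not> p dvd c' i" by blast
    then have "\<exists>i\<in>S. \<not> p dvd c i"
      using not_dvd_mult_if_zero_or_prime_elem[OF p j(2)] by (auto simp: c_def intro!: bexI[of _ i])
    ultimately show ?thesis using c'(2) by (auto simp: eq)
  qed
qed

lemma dependent_mod_if_orthogonal_mod:
  fixes p :: "'a::idom" and X :: "'i \<Rightarrow> nat \<Rightarrow> 'a"
  assumes p: "p = 0 \<or> prime_elem p"
    and I: "finite I" "m \<le> card I"
    and u: "t0 < m" "\<not> p dvd u t0"
    and orth: "\<And>i. i \<in> I \<Longrightarrow> p dvd (\<Sum>t<m. X i t * u t)"
  shows "\<exists>c. (\<exists>i\<in>I. \<not> p dvd c i) \<and> (\<forall>t<m. p dvd (\<Sum>i\<in>I. c i * X i t))"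
proof -
  define T where "T = {..<m} - {t0}"
  have "finite T" "card T < card I" using I u(1) by (auto simp: T_def)
  with exists_dependence_mod[OF p _ I(1)] obtain c where
    c: "\<exists>i\<in>I. \<not> p dvd c i" "\<forall>t\<in>T. p dvd (\<Sum>i\<in>I. c i * X i t)" by blast
  have split: "(\<Sum>t<m. X i t * u t) = X i t0 * u t0 + (\<Sum>t\<in>T. X i t * u t)" for i
    unfolding T_def using u(1) by (simp add: sum.remove)
  have swap: "(\<Sum>t\<in>T. u t * (\<Sum>i\<in>I. c i * X i t)) = (\<Sum>i\<in>I. c i * (\<Sum>t\<in>T. X i t * u t))"
    unfolding sum_distrib_left by (subst sum.swap) (simp add: mult_ac)
  have "u t0 * (\<Sum>i\<in>I. c i * X i t0) =
      (\<Sum>i\<in>I. c i * (\<Sum>t<m. X i t * u t)) - (\<Sum>t\<in>T. u t * (\<Sum>i\<in>I. c i * X i t))"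
    unfolding swap split by (simp add: sum_distrib_left distrib_left sum.distrib mult_ac)
  moreover have "p dvd (\<Sum>i\<in>I. c i * (\<Sum>t<m. X i t * u t)) - (\<Sum>t\<in>T. u t * (\<Sum>i\<in>I. c i * X i t))"
    using orth c(2) by (intro dvd_diff dvd_sum) (simp_all add: dvd_mult)
  ultimately have "p dvd (\<Sum>i\<in>I. c i * X i t0)"
    using not_dvd_mult_if_zero_or_prime_elem[OF p u(2)] by metis
  with c show ?thesis by (metis DiffI T_def lessThan_iff singletonD)
qed

lemma rat_cong0_imp_dvd:
  assumes "rat_cong0 q x" "x * of_int D = of_int z"
  shows "q dvd z"
proof -
  from assms(1) obtain u v where uv: "v > 0" "coprime v q" "q dvd u" "x = of_int u / of_int v"
    unfolding rat_cong0_def by blast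
  have "of_int (z * v) = (of_int (u * D) :: rat)" using assms(2) uv by (simp add: field_simps)
  then have "q dvd z * v" using uv(3) by (simp only: of_int_eq_iff) simp
  then show ?thesis using uv(2) by (metis coprime_commute coprime_dvd_mult_left_iff)
qed

lemma rat_cong0_of_int: "q dvd z \<Longrightarrow> rat_cong0 q (of_int z)"
  unfolding rat_cong0_def by (intro exI[of _ z] exI[of _ 1]) auto

lemma rat_cong0_0 [simp]: "rat_cong0 q 0"
  using rat_cong0_of_int[of q 0] by simp

lemma common_denominator:
  fixes f :: "'a \<Rightarrow> rat"
  assumes "finite A"
  obtains D :: int where "D > 0" and "\<And>s. s \<in> A \<Longrightarrow> f s * of_int D \<in> \<int>"
    and "\<And>p. prime p \<Longrightarrow> (\<And>s. s \<in> A \<Longrightarrow> \<not> p dvd snd (quotient_of (f s))) \<Longrightarrow> \<not> p dvd D"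
proof (rule that[of "\<Prod>s\<in>A. snd (quotient_of (f s))"])
  show "(\<Prod>s\<in>A. snd (quotient_of (f s))) > 0"
    by (intro prod_pos) (simp add: quotient_of_denom_pos')
next
  fix s assume "s \<in> A"
  then have "(\<Prod>s\<in>A. snd (quotient_of (f s))) = snd (quotient_of (f s)) * (\<Prod>s\<in>A-{s}. snd (quotient_of (f s)))"
    using assms by (simp add: prod.remove)
  moreover obtain u v where uv: "quotient_of (f s) = (u, v)" by fastforce
  moreover have "v > 0" "f s = of_int u / of_int v"
    using uv by (auto intro: quotient_of_denom_pos quotient_of_div)
  ultimately show "f s * of_int (\<Prod>s\<in>A. snd (quotient_of (f s))) \<in> \<int>"
    by (simp add: Ints_mult Ints_prod)
next
  fix p :: int assume "prime p" "\<And>s. s \<in> A \<Longrightarrow> \<not> p dvd snd (quotient_of (f s))"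
  with assms show "\<not> p dvd (\<Prod>s\<in>A. snd (quotient_of (f s)))" by (simp add: prime_dvd_prod_iff)
qed

lemma matrix_common_denominator:
  fixes M :: "nat \<Rightarrow> nat \<Rightarrow> rat"
  obtains D :: int where "D > 0" and "\<And>i t. i < n \<Longrightarrow> t < m \<Longrightarrow> M i t * of_int D \<in> \<int>"
    and "\<And>p. prime p \<Longrightarrow> (\<And>i t. i < n \<Longrightarrow> t < m \<Longrightarrow> \<not> p dvd snd (quotient_of (M i t))) \<Longrightarrow> \<not> p dvd D"
proof (rule common_denominator[of "{..<n} \<times> {..<m}" "case_prod M"])
  fix D :: int
  assume "D > 0" "\<And>s. s \<in> {..<n} \<times> {..<m} \<Longrightarrow> case_prod M s * of_int D \<in> \<int>"
    "\<And>p. prime p \<Longrightarrow> (\<And>s. s \<in> {..<n} \<times> {..<m} \<Longrightarrow> \<not> p dvd snd (quotient_of (case_prod M s))) \<Longrightarrow> \<not> p dvd D"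
  then show thesis by (intro that[of D]) auto
qed simp

lemma mat_vec_mult_of_int:
  assumes "\<And>t. t < m \<Longrightarrow> M i t * of_int D \<in> \<int>"
  shows "mat_vec M m w i * of_int D = of_int (\<Sum>t<m. \<lfloor>M i t * of_int D\<rfloor> * w ! t)"
  unfolding mat_vec_def sum_distrib_right of_int_sum of_int_mult
  using assms by (intro sum.cong refl) (simp add: mult_ac)

lemma Max_card_subsets:
  fixes P :: "nat set \<Rightarrow> bool"
  assumes "P {}"
  shows "\<exists>I\<subseteq>{..<n}. P I \<and> card I = Max {card I | I. I \<subseteq> {..<n} \<and> P I}"
    and "J \<subseteq> {..<n} \<Longrightarrow> P J \<Longrightarrow> card J \<le> Max {card I | I. I \<subseteq> {..<n} \<and> P I}"
proof -
  let ?F = "{card I | I. I \<subseteq> {..<n} \<and> P I}"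
  have fin: "finite ?F"
    by (rule finite_subset[of _ "{..n}"]) (auto dest: card_mono[rotated, of _ "{..<n}"])
  have "?F \<noteq> {}" using assms by blast
  from Max_in[OF fin this] show "\<exists>I\<subseteq>{..<n}. P I \<and> card I = Max ?F" by auto
  show "J \<subseteq> {..<n} \<Longrightarrow> P J \<Longrightarrow> card J \<le> Max ?F" using fin by (intro Max_ge) auto
qed

lemma card_less_if_rows_indep_mod:
  fixes M :: "nat \<Rightarrow> nat \<Rightarrow> rat" and p :: int
  assumes p: "prime p"
    and den: "\<And>i t. i < n \<Longrightarrow> t < m \<Longrightarrow> \<not> p dvd snd (quotient_of (M i t))"
    and u: "cong_ker M n m p u" "t0 < m" "\<not> p dvd u ! t0"
    and I: "I \<subseteq> {..<n}" "rows_indep_mod p M m I"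
  shows "card I < m"
proof (rule ccontr)
  assume "\<not> card I < m"
  obtain D where DM: "\<And>i t. i < n \<Longrightarrow> t < m \<Longrightarrow> M i t * of_int D \<in> \<int>" and Dp: "\<not> p dvd D"
    using matrix_common_denominator[of n m M] p den by metis
  define X where "X i t = \<lfloor>M i t * of_int D\<rfloor>" for i t
  have orth: "p dvd (\<Sum>t<m. X i t * u ! t)" if "i \<in> I" for i
  proof -
    have "i < n" using that I(1) by auto
    then have "rat_cong0 p (mat_vec M m u i)" using u(1) by (simp add: cong_ker_def)
    from rat_cong0_imp_dvd[OF this mat_vec_mult_of_int] DM[OF \<open>i < n\<close>] show ?thesis
      by (simp add: X_def)
  qed
  have "p = 0 \<or> prime_elem p" "finite I" "m \<le> card I"
    using prime_imp_prime_elem[OF p] I(1) finite_subset \<open>\<not> card I < m\<close> by auto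
  from dependent_mod_if_orthogonal_mod[of p I m t0 "\<lambda>t. u ! t" X, OF this u(2,3) orth]
  obtain c where c: "\<exists>i\<in>I. \<not> p dvd c i" "\<forall>t<m. p dvd (\<Sum>i\<in>I. c i * X i t)"
    by blast
  have "rat_cong0 p (\<Sum>i\<in>I. of_int (c i * D) * M i t)" if "t < m" for t
  proof -
    have eq: "(\<Sum>i\<in>I. of_int (c i * D) * M i t) = of_int (\<Sum>i\<in>I. c i * X i t)"
      unfolding of_int_sum of_int_mult X_def using that I(1) DM
      by (intro sum.cong refl) (auto simp: mult_ac)
    have "p dvd (\<Sum>i\<in>I. c i * X i t)" using c(2) that by blast
    then show ?thesis unfolding eq by (rule rat_cong0_of_int)
  qed
  moreover have "(\<forall>t<m. rat_cong0 p (\<Sum>i\<in>I. of_int (c i * D) * M i t)) \<longrightarrow> (\<forall>i\<in>I. p dvd c i * D)"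
    using I(2) unfolding rows_indep_mod_def by (rule spec)
  moreover obtain i where "i \<in> I" "\<not> p dvd c i" using c(1) by blast
  ultimately show False using Dp p by (auto simp: prime_dvd_mult_iff)
qed

lemma rank_mod_less_if_kernel_mod_nontrivial:
  fixes M :: "nat \<Rightarrow> nat \<Rightarrow> rat" and p :: int
  assumes p: "prime p"
    and den: "\<And>i t. i < n \<Longrightarrow> t < m \<Longrightarrow> \<not> p dvd snd (quotient_of (M i t))"
    and "kernel_mod_nontrivial M n m p"
  shows "rank_mod p M n m < m"
proof -
  obtain u t0 where u: "cong_ker M n m p u" "t0 < m" "\<not> p dvd u ! t0"
    using assms(3) unfolding kernel_mod_nontrivial_def by blast
  have "rows_indep_mod p M m {}" by (simp add: rows_indep_mod_def)
  from Max_card_subsets(1)[of "rows_indep_mod p M m", OF this]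
  obtain I where "I \<subseteq> {..<n}" "rows_indep_mod p M m I" "card I = rank_mod p M n m"
    unfolding rank_mod_def by blast
  with card_less_if_rows_indep_mod[OF p den u] show ?thesis by metis
qed

lemma orthogonal_to_dependent_row:
  fixes M :: "nat \<Rightarrow> nat \<Rightarrow> rat"
  assumes I: "finite I" "i \<notin> I" "rows_indep_Q M m I"
    and dep: "\<not> rows_indep_Q M m (insert i I)"
    and orth: "\<And>l. l \<in> I \<Longrightarrow> (\<Sum>t<m. x t * M l t) = 0"
  shows "(\<Sum>t<m. x t * M i t) = 0"
proof -
  obtain g where g: "\<forall>t<m. (\<Sum>l\<in>insert i I. g l * M l t) = 0" "\<exists>l\<in>insert i I. g l \<noteq> 0"
    using dep unfolding rows_indep_Q_def by blast
  have gi: "g i * M i t = - (\<Sum>l\<in>I. g l * M l t)" if "t < m" for t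
    using g(1) that I by (simp add: eq_neg_iff_add_eq_0)
  have "g i \<noteq> 0"
  proof
    assume "g i = 0"
    then have "\<forall>l\<in>I. g l = 0" using gi I(3) unfolding rows_indep_Q_def by auto
    with g(2) \<open>g i = 0\<close> show False by auto
  qed
  have "g i * (\<Sum>t<m. x t * M i t) = (\<Sum>t<m. x t * (g i * M i t))"
    by (simp add: sum_distrib_left mult_ac)
  also have "\<dots> = (\<Sum>t<m. - (\<Sum>l\<in>I. g l * (x t * M l t)))"
    by (intro sum.cong refl) (simp add: gi sum_distrib_left mult_ac)
  also have "\<dots> = - (\<Sum>l\<in>I. g l * (\<Sum>t<m. x t * M l t))"
    by (simp add: sum_negf sum_distrib_left) (rule sum.swap)
  also have "\<dots> = 0" using orth by simp
  finally show ?thesis using \<open>g i \<noteq> 0\<close> by simp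
qed

lemma exists_rat_kernel_vector:
  fixes M :: "nat \<Rightarrow> nat \<Rightarrow> rat"
  assumes "rank_Q M n m < m"
  obtains x t0 where "t0 < m" "x t0 \<noteq> 0" "\<And>i. i < n \<Longrightarrow> (\<Sum>t<m. x t * M i t) = 0"
proof -
  have indep0: "rows_indep_Q M m {}" by (simp add: rows_indep_Q_def)
  obtain I where I: "I \<subseteq> {..<n}" "rows_indep_Q M m I" "card I = rank_Q M n m"
    using Max_card_subsets(1)[of "rows_indep_Q M m" n, OF indep0] unfolding rank_Q_def by blast
  have "finite I" using I(1) finite_subset by blast
  then obtain x where x: "\<exists>t\<in>{..<m}. \<not> 0 dvd x t" "\<forall>i\<in>I. 0 dvd (\<Sum>t<m. x t * M i t)"
    using exists_dependence_mod[of 0 I "{..<m}" "\<lambda>t i. M i t"] assms I(3) by auto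
  have "(\<Sum>t<m. x t * M i t) = 0" if "i < n" for i
  proof (cases "i \<in> I")
    case False
    have "card (insert i I) > rank_Q M n m" using False \<open>finite I\<close> I(3) by simp
    then have "\<not> rows_indep_Q M m (insert i I)"
      using Max_card_subsets(2)[of "rows_indep_Q M m", OF indep0, of "insert i I" n] I(1) that
      unfolding rank_Q_def by fastforce
    with orthogonal_to_dependent_row[OF \<open>finite I\<close> False I(2)] x(2) show ?thesis by auto
  qed (use x(2) in auto)
  with x(1) that show ?thesis by auto
qed

lemma exists_int_kernel_vector:
  fixes M :: "nat \<Rightarrow> nat \<Rightarrow> rat"
  assumes "rank_Q M n m < m"
  obtains v where "in_ker M n m v" "v \<noteq> replicate m 0"
proof -
  obtain x t0 where x: "t0 < m" "x t0 \<noteq> 0" "\<And>i. i < n \<Longrightarrow> (\<Sum>t<m. x t * M i t) = 0"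
    using exists_rat_kernel_vector[OF assms] by blast
  obtain L :: int where "L > 0" and xL: "\<And>t. t < m \<Longrightarrow> x t * of_int L \<in> \<int>"
    by (rule common_denominator[of "{..<m}" x]) auto
  define v where "v = map (\<lambda>t. \<lfloor>x t * of_int L\<rfloor>) [0..<m]"
  have v: "of_int (v ! t) = x t * of_int L" if "t < m" for t
    using that xL by (simp add: v_def)
  have "in_ker M n m v"
    unfolding in_ker_def
  proof (intro conjI allI impI)
    show "length v = m" by (simp add: v_def)
    fix i assume "i < n"
    have "mat_vec M m v i = of_int L * (\<Sum>t<m. x t * M i t)"
      unfolding mat_vec_def sum_distrib_left by (intro sum.cong refl) (simp add: v mult_ac)
    with x(3)[OF \<open>i < n\<close>] show "mat_vec M m v i = 0" by simp
  qed
  moreover have "v ! t0 \<noteq> 0" using v[OF x(1)] x(2) \<open>L > 0\<close> by auto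
  then have "v \<noteq> replicate m 0" using x(1) by auto
  ultimately show ?thesis by (rule that)
qed

lemma sqnorm_nonneg: "0 \<le> sqnorm v"
  unfolding sqnorm_def by (induction v) auto

lemma abs_nth_le_sqnorm:
  assumes "t < length v" shows "\<bar>v ! t\<bar> \<le> sqnorm v"
proof -
  have "\<bar>v ! t\<bar> \<le> (v ! t)\<^sup>2"
  proof (cases "v ! t = 0")
    case False
    then have "\<bar>v ! t\<bar> * 1 \<le> \<bar>v ! t\<bar> * \<bar>v ! t\<bar>" by (intro mult_left_mono) auto
    then show ?thesis by (simp add: power2_eq_square abs_mult[symmetric])
  qed simp
  also have "\<dots> \<le> (\<Sum>i\<in>{0..<length v}. (v ! i)\<^sup>2)"
    by (rule member_le_sum) (use assms in auto)
  also have "\<dots> = sqnorm v" unfolding sqnorm_def sum_list_sum_nth by simp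
  finally show ?thesis .
qed

lemma lll_hd_short_nonzero:
  assumes lll: "lll_spec m lll" and S: "\<forall>s\<in>set S. length s = m"
    and v: "v \<in> lattice_of m S" "v \<noteq> replicate m 0"
  shows "hd (lll S) \<in> lattice_of m S" and "hd (lll S) \<noteq> replicate m 0"
    and "sqnorm (hd (lll S)) \<le> 4 ^ m * sqnorm v"
proof -
  have len: "\<forall>s\<in>set (lll S). length s = m" and lat: "lattice_of m (lll S) = lattice_of m S"
    and indep: "int_lin_indep m (lll S)"
    and short: "lll S \<noteq> [] \<longrightarrow> (\<forall>v\<in>lattice_of m S. v \<noteq> replicate m 0 \<longrightarrow> sqnorm (hd (lll S)) \<le> 4 ^ m * sqnorm v)"
    using lll S unfolding lll_spec_def by blast+
  have ne: "lll S \<noteq> []"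
  proof
    assume "lll S = []"
    then have "v \<in> lattice_of m []" using v(1) lat by simp
    then have "v = replicate m 0" unfolding lattice_of_def by (simp add: list_eq_iff_nth_eq)
    with v(2) show False ..
  qed
  then show "sqnorm (hd (lll S)) \<le> 4 ^ m * sqnorm v" using short v by blast
  define c0 where "c0 (i::nat) = (if i = 0 then 1 else 0 :: int)" for i
  have comb: "(\<Sum>i<length (lll S). c0 i * (lll S ! i) ! t) = hd (lll S) ! t" for t
  proof -
    have "(\<Sum>i<length (lll S). c0 i * (lll S ! i) ! t) = (\<Sum>i<length (lll S). if i = 0 then (lll S ! i) ! t else 0)"
      by (intro sum.cong refl) (simp add: c0_def)
    also have "\<dots> = hd (lll S) ! t" using ne by (simp add: hd_conv_nth)
    finally show ?thesis .
  qed
  have "length (hd (lll S)) = m" using len ne by simp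
  then have "hd (lll S) \<in> lattice_of m (lll S)"
    unfolding lattice_of_def by (intro CollectI conjI exI[of _ c0] allI impI) (simp_all add: comb)
  with lat show "hd (lll S) \<in> lattice_of m S" by simp
  show "hd (lll S) \<noteq> replicate m 0"
  proof
    assume "hd (lll S) = replicate m 0"
    then have "c0 0 = 0" using indep ne comb unfolding int_lin_indep_def by simp
    then show False by (simp add: c0_def)
  qed
qed

lemma lll_cong_ker_lattice:
  assumes lll: "lll_spec m lll" and V: "\<forall>v\<in>set V. length v = m"
    and lat: "lattice_of m (V @ map (unitvec m q) [0..<m]) = {v. cong_ker M n m q v}"
    and v0: "in_ker M n m v0" "v0 \<noteq> replicate m 0"
  defines "w \<equiv> hd (lll (V @ map (unitvec m q) [0..<m]))"
  shows "cong_ker M n m q w \<and> w \<noteq> replicate m 0 \<and> sqnorm w \<le> 4 ^ m * sqnorm v0"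
proof -
  have S: "\<forall>s\<in>set (V @ map (unitvec m q) [0..<m]). length s = m" using V by (auto simp: unitvec_def)
  have "v0 \<in> lattice_of m (V @ map (unitvec m q) [0..<m])"
    using lat v0(1) by (auto simp: in_ker_def cong_ker_def)
  from lll_hd_short_nonzero[OF lll S this v0(2)] show ?thesis using lat unfolding w_def by auto
qed

lemma abs_mat_vec_le:
  assumes "\<And>t. t < m \<Longrightarrow> \<bar>w ! t\<bar> \<le> B"
  shows "\<bar>mat_vec M m w i\<bar> \<le> (\<Sum>t<m. \<bar>M i t\<bar>) * of_int B"
proof -
  have "\<bar>mat_vec M m w i\<bar> \<le> (\<Sum>t<m. \<bar>M i t * of_int (w ! t)\<bar>)"
    unfolding mat_vec_def by (rule sum_abs)
  also have "\<dots> \<le> (\<Sum>t<m. \<bar>M i t\<bar> * of_int B)"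
    unfolding abs_mult using assms by (intro sum_mono mult_left_mono) (auto simp flip: of_int_abs)
  finally show ?thesis by (simp add: sum_distrib_right)
qed

lemma short_cong_ker_imp_in_ker:
  fixes M :: "nat \<Rightarrow> nat \<Rightarrow> rat" and B :: int
  obtains Q :: nat where "\<And>q w. int Q < q \<Longrightarrow> cong_ker M n m q w \<Longrightarrow> sqnorm w \<le> B \<Longrightarrow> in_ker M n m w"
proof -
  obtain D where "D > 0" and DM: "\<And>i t. i < n \<Longrightarrow> t < m \<Longrightarrow> M i t * of_int D \<in> \<int>"
    using matrix_common_denominator[of n m M] by metis
  define C where "C = (\<Sum>i<n. \<Sum>t<m. \<bar>M i t\<bar>) * of_int B * of_int D"
  have "in_ker M n m w" if q: "int (nat \<lceil>C\<rceil>) < q" and w: "cong_ker M n m q w" "sqnorm w \<le> B" for q w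
    unfolding in_ker_def
  proof (intro conjI allI impI)
    show "length w = m" using w(1) by (simp add: cong_ker_def)
    fix i assume i: "i < n"
    \<comment> \<open>z is divisible by q but, as w is short, of absolute value at most C < q.\<close>
    define z where "z = (\<Sum>t<m. \<lfloor>M i t * of_int D\<rfloor> * w ! t)"
    have xz: "mat_vec M m w i * of_int D = of_int z"
      unfolding z_def using DM[OF i] by (rule mat_vec_mult_of_int)
    have "q dvd z" using w(1) i rat_cong0_imp_dvd[OF _ xz] by (simp add: cong_ker_def)
    have "\<bar>w ! t\<bar> \<le> B" if "t < m" for t
      using abs_nth_le_sqnorm[of t w] w that by (simp add: cong_ker_def)
    then have "\<bar>mat_vec M m w i\<bar> * of_int D \<le> (\<Sum>t<m. \<bar>M i t\<bar>) * of_int B * of_int D"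
      using abs_mat_vec_le \<open>D > 0\<close> by (intro mult_right_mono) auto
    also have "\<dots> \<le> C"
      unfolding C_def using i sqnorm_nonneg[of w] w(2) \<open>D > 0\<close>
      by (intro mult_right_mono member_le_sum[of i "{..<n}" "\<lambda>i. \<Sum>t<m. \<bar>M i t\<bar>"]) auto
    finally have "of_int \<bar>z\<bar> \<le> C"
      using xz \<open>D > 0\<close> by (simp flip: xz add: abs_mult)
    then have "\<bar>z\<bar> < q" using q by linarith
    then have "z = 0" using \<open>q dvd z\<close> dvd_imp_le_int[of z q] by fastforce
    with xz \<open>D > 0\<close> show "mat_vec M m w i = 0" by simp
  qed
  then show ?thesis by (rule that)
qed

lemma int_less_prod_primes:
  assumes "\<And>i. prime (P i)"
  shows "int k < (\<Prod>i\<le>k. int (P i))"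
proof -
  have "int k < int (2 ^ Suc k)" by (simp only: of_nat_less_iff) (rule less_trans[OF lessI less_exp])
  also have "\<dots> = (\<Prod>i\<le>k. 2)" by simp
  also have "\<dots> \<le> (\<Prod>i\<le>k. int (P i))"
    using assms by (intro prod_mono) (auto simp: prime_ge_2_nat)
  finally show ?thesis .
qed

lemma sum_lessThan_mult_blocks:
  fixes g :: "nat \<Rightarrow> 'a::comm_monoid_add"
  shows "(\<Sum>t<k * l. g t) = (\<Sum>j<l. \<Sum>i<k. g (j * k + i))"
proof -
  have "(\<Sum>t<k * l. g t) = (\<Sum>j<l. \<Sum>t\<in>{j*k..<j*k+k}. g t)"
    by (simp add: sum.nat_group mult.commute)
  also have "\<dots> = (\<Sum>j<l. \<Sum>i<k. g (j * k + i))"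
    by (simp add: sum.atLeastLessThan_shift_0 atLeast0LessThan)
  finally show ?thesis .
qed

lemma mat_vec_recM:
  "mat_vec (recM a b r d) ((r + 1) * (d + 1)) w n =
    (\<Sum>i\<le>r. \<Sum>j\<le>d. of_int (w ! ((d - j) * (r + 1) + i)) * poly (b j) (of_nat n) * a (n + i))"
proof -
  let ?g = "\<lambda>t. recM a b r d n t * of_int (w ! t)"
  have "mat_vec (recM a b r d) ((r + 1) * (d + 1)) w n = (\<Sum>j<d+1. \<Sum>i<r+1. ?g (j * (r + 1) + i))"
    unfolding mat_vec_def by (rule sum_lessThan_mult_blocks)
  also have "\<dots> = (\<Sum>j<d+1. \<Sum>i<r+1. ?g ((d - j) * (r + 1) + i))"
    by (subst sum.nat_diff_reindex[symmetric]) simp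
  also have "\<dots> = (\<Sum>i<r+1. \<Sum>j<d+1. ?g ((d - j) * (r + 1) + i))"
    by (rule sum.swap)
  also have "\<dots> = (\<Sum>i\<le>r. \<Sum>j\<le>d. ?g ((d - j) * (r + 1) + i))"
    by (simp only: lessThan_Suc_atMost flip: Suc_eq_plus1)
  also have "\<dots> = (\<Sum>i\<le>r. \<Sum>j\<le>d. of_int (w ! ((d - j) * (r + 1) + i)) * poly (b j) (of_nat n) * a (n + i))"
  proof (intro sum.cong refl)
    fix i j assume "i \<in> {..r}" "j \<in> {..d}"
    then have "i < r + 1" "j \<le> d" by auto
    then have "((d - j) * (r + 1) + i) mod (r + 1) = i" "((d - j) * (r + 1) + i) div (r + 1) = d - j"
      by (metis mod_mult_self3 mod_less, metis div_mult_self3 div_less add_0_right not_less0)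
    with \<open>j \<le> d\<close> show "?g ((d - j) * (r + 1) + i) = of_int (w ! ((d - j) * (r + 1) + i)) * poly (b j) (of_nat n) * a (n + i)"
      unfolding recM_def by (simp add: mult_ac)
  qed
  finally show ?thesis .
qed

theorem mainTheorem1:
  fixes a :: "nat \<Rightarrow> rat" and b :: "nat \<Rightarrow> rat poly" and N r d :: nat
    and P :: "nat \<Rightarrow> nat"
    and Vs :: "nat \<Rightarrow> int list list"
    and lll :: "int list list \<Rightarrow> int list list"
  defines "m \<equiv> (r + 1) * (d + 1)"
    and "n \<equiv> N - r + 1"
    and "M \<equiv> recM a b r d"
    and "q \<equiv> \<lambda>k. \<Prod>i\<le>k. int (P i)"
    and "w \<equiv> \<lambda>k. hd (lll (Vs k @ map (unitvec ((r + 1) * (d + 1)) (\<Prod>i\<le>k. int (P i))) [0..<(r + 1) * (d + 1)]))"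
  assumes basis: "\<forall>j. b j \<noteq> 0 \<and> degree (b j) = j"
    and rN: "r \<le> N"
    and primes: "\<forall>k. prime (P k)"
    and distinct: "inj P"
    and denoms: "\<forall>k i t. i < n \<longrightarrow> t < m \<longrightarrow> \<not> int (P k) dvd snd (quotient_of (M i t))"
    and ranks: "\<forall>k. rank_mod (int (P k)) M n m = rank_Q M n m"
    and crt: "\<forall>k\<ge>1. (\<forall>v\<in>set (Vs k). length v = m) \<and>
               lattice_of m (Vs k @ map (unitvec m (q k)) [0..<m]) = {v. cong_ker M n m (q k) v}"
    and lll: "lll_spec m lll"
  shows "kernel_mod_nontrivial M n m (int (P 0)) \<longrightarrow>
           (\<exists>k\<ge>1. in_ker M n m (w k) \<and> w k \<noteq> replicate m 0) \<and>
           (let K = (LEAST k. k \<ge> 1 \<and> in_ker M n m (w k) \<and> w k \<noteq> replicate m 0);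
                c = (\<lambda>i j. w K ! ((d - j) * (r + 1) + i))
            in in_ker M n m (w K) \<and> w K \<noteq> replicate m 0 \<and>
               (\<forall>nn\<le>N - r. (\<Sum>i\<le>r. \<Sum>j\<le>d. of_int (c i j) * poly (b j) (of_nat nn) * a (nn + i)) = 0))"
proof
  assume "kernel_mod_nontrivial M n m (int (P 0))"
  then have "rank_Q M n m < m"
    using rank_mod_less_if_kernel_mod_nontrivial[of "int (P 0)" n m M] primes denoms ranks by auto
  then obtain v0 where v0: "in_ker M n m v0" "v0 \<noteq> replicate m 0"
    by (rule exists_int_kernel_vector)
  have w: "cong_ker M n m (q k) (w k) \<and> w k \<noteq> replicate m 0 \<and> sqnorm (w k) \<le> 4 ^ m * sqnorm v0"
    if "k \<ge> 1" for k
    using lll_cong_ker_lattice[OF lll _ _ v0] crt that unfolding w_def m_def q_def by auto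
  obtain Q where Q: "\<And>q w. int Q < q \<Longrightarrow> cong_ker M n m q w \<Longrightarrow> sqnorm w \<le> 4 ^ m * sqnorm v0 \<Longrightarrow> in_ker M n m w"
    using short_cong_ker_imp_in_ker[where M = M and n = n and m = m and B = "4 ^ m * sqnorm v0"] by blast
  have "int Q < q (Suc Q)" using int_less_prod_primes[of P "Suc Q"] primes q_def by simp
  moreover have "cong_ker M n m (q (Suc Q)) (w (Suc Q))" "w (Suc Q) \<noteq> replicate m 0"
    "sqnorm (w (Suc Q)) \<le> 4 ^ m * sqnorm v0"
    using w[of "Suc Q"] by auto
  ultimately have ex: "\<exists>k\<ge>1. in_ker M n m (w k) \<and> w k \<noteq> replicate m 0"
    using Q by (intro exI[of _ "Suc Q"]) auto
  define K where "K = (LEAST k. k \<ge> 1 \<and> in_ker M n m (w k) \<and> w k \<noteq> replicate m 0)"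
  have K: "in_ker M n m (w K)" "w K \<noteq> replicate m 0"
    using LeastI_ex[OF ex] unfolding K_def by auto
  have "(\<Sum>i\<le>r. \<Sum>j\<le>d. of_int (w K ! ((d - j) * (r + 1) + i)) * poly (b j) (of_nat nn) * a (nn + i)) = 0"
    if "nn \<le> N - r" for nn
    using K(1) that unfolding in_ker_def n_def M_def m_def mat_vec_recM by auto
  with ex K show "(\<exists>k\<ge>1. in_ker M n m (w k) \<and> w k \<noteq> replicate m 0) \<and>
           (let K = (LEAST k. k \<ge> 1 \<and> in_ker M n m (w k) \<and> w k \<noteq> replicate m 0);
                c = (\<lambda>i j. w K ! ((d - j) * (r + 1) + i))
            in in_ker M n m (w K) \<and> w K \<noteq> replicate m 0 \<and>
               (\<forall>nn\<le>N - r. (\<Sum>i\<le>r. \<Sum>j\<le>d. of_int (c i j) * poly (b j) (of_nat nn) * a (nn + i)) = 0))"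
    unfolding Let_def K_def[symmetric] by blast
qed

end
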